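(* Consider two coplanar ellipses with a common focus at the origin of $\mathbb{R}^2$, parametrized by their true anomalies $f_1,f_2$: \[ \mathcal{X}_1(f_1)=\frac{p_1}{1+e_1\cos f_1}(\cos f_1,\ \sin f_1),\qquad \mathcal{X}_2(f_2)=\frac{p_2}{1+e_2\cos f_2}\bigl(\cos(f_2+\omega_2),\ \sin(f_2+\omega_2)\bigr), \] with $p_1,p_2>0$, $e_1,e_2\in[0,1)$, $\omega_2\in\mathbb{R}$, and let $d^2(f_1,f_2)=|\mathcal{X}_1(f_1)-\mathcal{X}_2(f_2)|^2$ on the torus $(\mathbb{R}/2\pi\mathbb{Z})^2$. Then, in general (i.e. for generic values of $p_1,p_2,e_1,e_2,\omega_2$), the function $d^2$ has at most $10$ critical points that do not correspond to trajectory intersections (points with $d^2(f_1,f_2)=0$), and hence at most $12$ critical points in total.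
   Context: A critical point of $d^2$ is a point $(f_1,f_2)$ where both partial derivatives of $d^2$ vanish; a trajectory intersection is a critical point with $d^2(f_1,f_2)=0$. *)

theory Defs
  imports "HOL-Analysis.Analysis"
begin

definition X1 :: "real \<Rightarrow> real \<Rightarrow> real \<Rightarrow> real \<times> real" where
  "X1 p1 e1 f1 = (p1 / (1 + e1 * cos f1) * cos f1, p1 / (1 + e1 * cos f1) * sin f1)"

definition X2 :: "real \<Rightarrow> real \<Rightarrow> real \<Rightarrow> real \<Rightarrow> real \<times> real" where
  "X2 p2 e2 om2 f2 = (p2 / (1 + e2 * cos f2) * cos (f2 + om2), p2 / (1 + e2 * cos f2) * sin (f2 + om2))"

definition dist2 :: "real \<Rightarrow> real \<Rightarrow> real \<Rightarrow> real \<Rightarrow> real \<Rightarrow> real \<Rightarrow> real \<Rightarrow> real" where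
  "dist2 p1 p2 e1 e2 om2 f1 f2 =
     (fst (X1 p1 e1 f1) - fst (X2 p2 e2 om2 f2))\<^sup>2 + (snd (X1 p1 e1 f1) - snd (X2 p2 e2 om2 f2))\<^sup>2"

definition crit_point :: "real \<Rightarrow> real \<Rightarrow> real \<Rightarrow> real \<Rightarrow> real \<Rightarrow> real \<Rightarrow> real \<Rightarrow> bool" where
  "crit_point p1 p2 e1 e2 om2 f1 f2 \<longleftrightarrow>
     ((\<lambda>x. dist2 p1 p2 e1 e2 om2 x f2) has_real_derivative 0) (at f1) \<and>
     ((\<lambda>y. dist2 p1 p2 e1 e2 om2 f1 y) has_real_derivative 0) (at f2)"

text \<open>Critical points on the torus (R/2piZ)^2, represented by the fundamental domain [0,2pi)^2.\<close>
definition crit_points :: "real \<Rightarrow> real \<Rightarrow> real \<Rightarrow> real \<Rightarrow> real \<Rightarrow> (real \<times> real) set" where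
  "crit_points p1 p2 e1 e2 om2 =
     {(f1, f2). f1 \<in> {0..<2*pi} \<and> f2 \<in> {0..<2*pi} \<and> crit_point p1 p2 e1 e2 om2 f1 f2}"

end

theory Submission
  imports Defs "HOL-Computational_Algebra.Polynomial"
begin

text \<open>
  At a critical point with \<open>d \<noteq> 0\<close> the difference vector \<open>X1 - X2\<close> is orthogonal to both
  tangents, so the tangent of the second ellipse is \<open>\<mu>\<close> times that of the first. Then the
  point \<open>(cos (f2 + om2), sin (f2 + om2))\<close> is affine in \<open>\<mu>\<close>, and the unit circle identity
  and the orthogonality to the first tangent become a quadratic and a linear equation for
  \<open>\<mu>\<close> with coefficients trigonometric polynomials in \<open>f1\<close>. Eliminating \<open>\<mu>\<close> leaves a
  trigonometric polynomial of degree 5 in \<open>f1\<close>, i.e. a polynomial of degree 10 in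
  \<open>z = cis f1\<close>. A root carries at most as many critical points as its multiplicity: two
  values of \<open>\<mu>\<close> occur only when the linear equation degenerates, and then \<open>z\<close> is a double
  root. Intersections satisfy a first-degree trigonometric equation in \<open>f1\<close>, and \<open>f1\<close>
  determines \<open>f2\<close>, so there are at most two. Both polynomials are nonzero as soon as
  \<open>e2 * sin om2 \<noteq> 0\<close>, which excludes only a closed null set of parameters.
\<close>

lemma one_plus_mult_cos_pos:
  fixes e x :: real
  assumes "0 \<le> e" "e < 1"
  shows "0 < 1 + e * cos x"
proof -
  have "- e \<le> e * cos x"
    using assms(1) cos_ge_minus_one[of x] by (metis mult_left_mono mult_minus1_right)
  then show ?thesis
    using assms(2) by linarith
qed

lemma inj_on_cos_sin_add: "inj_on (\<lambda>x. (cos (x + w), sin (x + w))) {0..<2 * pi}"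
proof (rule inj_onI)
  fix x y
  assume x: "x \<in> {0..<2 * pi}" and y: "y \<in> {0..<2 * pi}"
    and "(cos (x + w), sin (x + w)) = (cos (y + w), sin (y + w))"
  then obtain n :: int where "x + w = y + w + 2 * pi * n"
    using sin_cos_eq_iff by (metis prod.inject)
  moreover have "\<bar>x - y\<bar> < 2 * pi * 1"
    using x y by auto
  ultimately have "\<bar>real_of_int n\<bar> < 1"
    by (simp add: abs_mult)
  with \<open>x + w = y + w + 2 * pi * n\<close> show "x = y"
    by simp
qed

lemma inj_on_cis_atLeastLessThan_2pi: "inj_on cis {0..<2 * pi}"
  using inj_on_cos_sin_add[of 0] by (auto simp: inj_on_def complex_eq_iff)

lemma ex_scaleR_if_orthogonal_to_same:
  fixes d u v :: "real \<times> real"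
  assumes "d \<noteq> 0" "u \<noteq> 0" "inner d u = 0" "inner d v = 0"
  shows "\<exists>\<mu>. v = \<mu> *\<^sub>R u"
proof -
  obtain d1 d2 u1 u2 v1 v2 where d: "d = (d1, d2)" and u: "u = (u1, u2)" and v: "v = (v1, v2)"
    by (cases d, cases u, cases v)
  have cross: "u1 * v2 = u2 * v1"
  proof (cases "d1 = 0")
    case True
    then have "d2 \<noteq> 0" using assms(1) d by (auto simp: zero_prod_def)
    then show ?thesis
      using assms(3,4) True by (simp add: d u v)
  next
    case False
    have "d1 * (u1 * v2 - u2 * v1) = v2 * (d1 * u1 + d2 * u2) - u2 * (d1 * v1 + d2 * v2)"
      by (simp add: algebra_simps)
    also have "\<dots> = 0"
      using assms(3,4) by (simp add: d u v)
    finally show ?thesis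
      using False by simp
  qed
  show ?thesis
  proof (cases "u1 = 0")
    case True
    then have "u2 \<noteq> 0" "v1 = 0" using assms(2) cross u by (auto simp: zero_prod_def)
    then have "v = (v2 / u2) *\<^sub>R u"
      using True by (simp add: u v)
    then show ?thesis ..
  next
    case False
    then have "v = (v1 / u1) *\<^sub>R u"
      using cross by (simp add: u v field_simps)
    then show ?thesis ..
  qed
qed

lemma has_real_derivative_norm_diff_squared:
  fixes \<gamma> :: "real \<Rightarrow> 'a::real_inner"
  assumes "(\<gamma> has_vector_derivative v) (at t)"
  shows "((\<lambda>x. (norm (\<gamma> x - b))\<^sup>2) has_real_derivative 2 * inner (\<gamma> t - b) v) (at t)"
proof -
  have "((\<lambda>x. inner (\<gamma> x - b) (\<gamma> x - b)) has_derivative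
        (\<lambda>h. inner (\<gamma> t - b) (h *\<^sub>R v) + inner (h *\<^sub>R v) (\<gamma> t - b))) (at t)"
    using assms unfolding has_vector_derivative_def
    by (auto intro!: derivative_eq_intros)
  then show ?thesis
    unfolding has_field_derivative_def power2_norm_eq_inner
    by (rule has_derivative_eq_rhs) (simp add: fun_eq_iff inner_commute algebra_simps)
qed

definition conic_tangent :: "real \<Rightarrow> real \<Rightarrow> real \<Rightarrow> real \<times> real" where
  "conic_tangent e a x = (- sin (x + a) - e * sin a, cos (x + a) + e * cos a)"

lemma X2_has_vector_derivative:
  assumes "1 + e * cos x \<noteq> 0"
  shows "(X2 p e a has_vector_derivative (p / (1 + e * cos x)\<^sup>2) *\<^sub>R conic_tangent e a x) (at x)"
proof -
  have r: "((\<lambda>x. p / (1 + e * cos x)) has_real_derivative p * e * sin x / (1 + e * cos x)\<^sup>2) (at x)"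
    using assms by (auto intro!: derivative_eq_intros simp: power2_eq_square)
  have sin_a: "sin a = sin (x + a) * cos x - cos (x + a) * sin x"
    using sin_diff[of "x + a" x] by simp
  have cos_a: "cos a = cos (x + a) * cos x + sin (x + a) * sin x"
    using cos_diff[of "x + a" x] by simp
  have "((\<lambda>x. p / (1 + e * cos x) * cos (x + a)) has_real_derivative
      p / (1 + e * cos x)\<^sup>2 * (- sin (x + a) - e * sin a)) (at x)"
    using assms by (auto intro!: derivative_eq_intros r simp: sin_a field_simps power2_eq_square)
  moreover have "((\<lambda>x. p / (1 + e * cos x) * sin (x + a)) has_real_derivative
      p / (1 + e * cos x)\<^sup>2 * (cos (x + a) + e * cos a)) (at x)"
    using assms by (auto intro!: derivative_eq_intros r simp: cos_a field_simps power2_eq_square)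
  ultimately show ?thesis
    unfolding X2_def[abs_def] has_real_derivative_iff_has_vector_derivative
    by (rule has_vector_derivative_Pair[THEN has_vector_derivative_eq_rhs]) (simp add: conic_tangent_def)
qed

lemma X1_eq_X2: "X1 p e = X2 p e 0"
  by (simp add: fun_eq_iff X1_def X2_def)

lemma dist2_eq_norm: "dist2 p1 p2 e1 e2 om2 f1 f2 = (norm (X1 p1 e1 f1 - X2 p2 e2 om2 f2))\<^sup>2"
  unfolding dist2_def power2_norm_eq_inner by (simp add: inner_prod_def power2_eq_square)

lemma crit_point_imp_orthogonal_tangents:
  assumes "p1 \<noteq> 0" "p2 \<noteq> 0" "1 + e1 * cos f1 \<noteq> 0" "1 + e2 * cos f2 \<noteq> 0"
    and "crit_point p1 p2 e1 e2 om2 f1 f2"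
  shows "inner (X1 p1 e1 f1 - X2 p2 e2 om2 f2) (conic_tangent e1 0 f1) = 0"
    and "inner (X1 p1 e1 f1 - X2 p2 e2 om2 f2) (conic_tangent e2 om2 f2) = 0"
proof -
  let ?D = "X1 p1 e1 f1 - X2 p2 e2 om2 f2"
  have "((\<lambda>x. dist2 p1 p2 e1 e2 om2 x f2) has_real_derivative
      2 * inner ?D ((p1 / (1 + e1 * cos f1)\<^sup>2) *\<^sub>R conic_tangent e1 0 f1)) (at f1)"
    unfolding dist2_eq_norm X1_eq_X2
    by (intro has_real_derivative_norm_diff_squared X2_has_vector_derivative) (use assms in simp)
  with assms(5) have "2 * (p1 / (1 + e1 * cos f1)\<^sup>2) * inner ?D (conic_tangent e1 0 f1) = 0"
    unfolding crit_point_def by (metis DERIV_unique inner_scaleR_right mult.assoc)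
  with assms(1,3) show "inner ?D (conic_tangent e1 0 f1) = 0"
    by simp
  have "((\<lambda>y. dist2 p1 p2 e1 e2 om2 f1 y) has_real_derivative
      2 * inner (- ?D) ((p2 / (1 + e2 * cos f2)\<^sup>2) *\<^sub>R conic_tangent e2 om2 f2)) (at f2)"
    unfolding dist2_eq_norm norm_minus_commute[of "X1 p1 e1 f1"] minus_diff_eq
    by (intro has_real_derivative_norm_diff_squared X2_has_vector_derivative) (use assms in simp)
  with assms(5) have "- 2 * (p2 / (1 + e2 * cos f2)\<^sup>2) * inner ?D (conic_tangent e2 om2 f2) = 0"
    unfolding crit_point_def
    by (metis DERIV_unique inner_scaleR_right inner_minus_left mult.assoc mult_minus_left mult_minus_right)
  with assms(2,4) show "inner ?D (conic_tangent e2 om2 f2) = 0"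
    by simp
qed

text \<open>The coefficients of \<open>z * (\<alpha> + \<beta> * cos x + \<gamma> * sin x)\<close> after substituting
  \<open>cos x = (z + 1 / z) / 2\<close> and \<open>sin x = (z - 1 / z) / (2 * \<i>)\<close> for \<open>z = cis x\<close>.\<close>

definition trig_lin_poly :: "real \<Rightarrow> real \<Rightarrow> real \<Rightarrow> complex poly" where
  "trig_lin_poly \<alpha> \<beta> \<gamma> = [:Complex (\<beta> / 2) (\<gamma> / 2), of_real \<alpha>, Complex (\<beta> / 2) (- \<gamma> / 2):]"

lemma poly_trig_lin_poly_cis:
  "poly (trig_lin_poly \<alpha> \<beta> \<gamma>) (cis x) = cis x * of_real (\<alpha> + \<beta> * cos x + \<gamma> * sin x)"
proof -
  have sin_sq: "sin x * sin x = 1 - cos x * cos x"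
    using sin_cos_squared_add[of x] by (simp add: power2_eq_square)
  show ?thesis
    by (simp add: trig_lin_poly_def complex_eq_iff algebra_simps) (simp add: sin_sq field_simps)
qed

lemma degree_trig_lin_poly: "degree (trig_lin_poly \<alpha> \<beta> \<gamma>) \<le> 2"
  by (simp add: trig_lin_poly_def)

lemma degree_mult_trig_lin_poly:
  "degree (trig_lin_poly \<alpha> \<beta> \<gamma> * trig_lin_poly \<alpha>' \<beta>' \<gamma>') \<le> 4"
  using degree_mult_le[of "trig_lin_poly \<alpha> \<beta> \<gamma>" "trig_lin_poly \<alpha>' \<beta>' \<gamma>'"]
    degree_trig_lin_poly[of \<alpha> \<beta> \<gamma>] degree_trig_lin_poly[of \<alpha>' \<beta>' \<gamma>']
  by linarith

lemma trig_lin_poly_eq_0_iff: "trig_lin_poly \<alpha> \<beta> \<gamma> = 0 \<longleftrightarrow> \<alpha> = 0 \<and> \<beta> = 0 \<and> \<gamma> = 0"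
  by (auto simp: trig_lin_poly_def complex_eq_iff)

text \<open>Eliminates \<open>\<mu>\<close> from \<open>\<mu> * K = M\<close> and \<open>N * \<mu>\<^sup>2 - 2 * E * \<mu> - c = 0\<close> (see
  \<open>elim_eq_0\<close>); the factor \<open>[:0, 1:]\<close> balances the powers of \<open>z\<close> (see \<open>poly_elim_poly\<close>).\<close>

definition elim_poly ::
    "complex poly \<Rightarrow> complex poly \<Rightarrow> complex poly \<Rightarrow> complex poly \<Rightarrow> real \<Rightarrow> complex poly" where
  "elim_poly M K E N c = M\<^sup>2 * N - smult 2 (M * K * E) - smult (of_real c) ([:0, 1:] * K\<^sup>2)"

lemma elim_eq_0:
  fixes \<mu> M K E N c :: real
  assumes "\<mu> * K = M" "N * \<mu>\<^sup>2 - 2 * E * \<mu> - c = 0"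
  shows "M\<^sup>2 * N - 2 * M * K * E - c * K\<^sup>2 = 0"
proof -
  have "M\<^sup>2 * N - 2 * M * K * E - c * K\<^sup>2 = K\<^sup>2 * (N * \<mu>\<^sup>2 - 2 * E * \<mu> - c)"
    unfolding assms(1)[symmetric] by algebra
  with assms(2) show ?thesis
    by simp
qed

lemma poly_elim_poly:
  assumes "poly PM z = z\<^sup>2 * of_real M" "poly PK z = z\<^sup>2 * of_real K"
    and "poly PE z = z * of_real E" "poly PN z = z * of_real N"
  shows "poly (elim_poly PM PK PE PN c) z = z ^ 5 * of_real (M\<^sup>2 * N - 2 * M * K * E - c * K\<^sup>2)"
  by (simp add: elim_poly_def assms algebra_simps power2_eq_square eval_nat_numeral)

lemma degree_elim_poly:
  assumes "degree M \<le> 4" "degree K \<le> 4" "degree E \<le> 2" "degree N \<le> 2"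
  shows "degree (elim_poly M K E N c) \<le> 10"
proof -
  have "degree (M * M) \<le> 8" "degree (M * K) \<le> 8" "degree (K * K) \<le> 8"
    using assms by (auto intro!: degree_mult_le[THEN order_trans])
  then have "degree (M * M * N) \<le> 10" "degree (M * K * E) \<le> 10" "degree ([:0, 1:] * (K * K)) \<le> 10"
    using assms by (auto intro!: degree_mult_le[THEN order_trans])
  then show ?thesis
    unfolding elim_poly_def power2_eq_square
    by (intro degree_diff_le degree_smult_le[THEN order_trans])
qed

lemma elim_poly_double_root:
  assumes "poly M z = 0" "poly K z = 0"
  shows "[:- z, 1:]\<^sup>2 dvd elim_poly M K E N c"
proof -
  have M: "[:- z, 1:] dvd M" and K: "[:- z, 1:] dvd K"
    using assms by (simp_all add: poly_eq_0_iff_dvd)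
  have "[:- z, 1:]\<^sup>2 dvd M\<^sup>2" "[:- z, 1:]\<^sup>2 dvd K\<^sup>2"
    using M K by (simp_all add: dvd_power_same)
  moreover have "[:- z, 1:]\<^sup>2 dvd M * K"
    unfolding power2_eq_square using M K by (rule mult_dvd_mono)
  ultimately show ?thesis
    unfolding elim_poly_def by (intro dvd_diff dvd_smult) (rule dvd_mult2 dvd_mult; assumption)+
qed

lemma card_common_roots_le:
  fixes K M N E c :: real
  assumes "N \<noteq> 0"
  shows "finite {\<mu>. \<mu> * K = M \<and> N * \<mu>\<^sup>2 - 2 * E * \<mu> - c = 0}"
    and "card {\<mu>. \<mu> * K = M \<and> N * \<mu>\<^sup>2 - 2 * E * \<mu> - c = 0} \<le> (if K = 0 then 2 else 1)"
proof -
  let ?\<Lambda> = "{\<mu>. \<mu> * K = M \<and> N * \<mu>\<^sup>2 - 2 * E * \<mu> - c = 0}"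
  define Q where "Q = [:- c, - 2 * E, N:]"
  have "Q \<noteq> 0" "degree Q = 2"
    using assms by (simp_all add: Q_def)
  then have roots: "finite {\<mu>. poly Q \<mu> = 0}" "card {\<mu>. poly Q \<mu> = 0} \<le> 2"
    using poly_roots_finite card_poly_roots_bound by fastforce+
  have sub: "?\<Lambda> \<subseteq> {\<mu>. poly Q \<mu> = 0}"
    by (auto simp: Q_def algebra_simps power2_eq_square)
  show "finite ?\<Lambda>"
    using finite_subset[OF sub roots(1)] .
  show "card ?\<Lambda> \<le> (if K = 0 then 2 else 1)"
  proof (cases "K = 0")
    case True
    then show ?thesis
      using card_mono[OF roots(1) sub] roots(2) by (simp only: if_P)
  next
    case False
    then have "?\<Lambda> \<subseteq> {M / K}"
      by (auto simp: eq_divide_eq)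
    with False show ?thesis
      using card_mono[of "{M / K}" ?\<Lambda>] by simp
  qed
qed

lemma finite_card_le_degree_by_fibres:
  fixes S :: "('a \<times> 'b) set" and P :: "'c::idom poly"
  assumes "P \<noteq> 0" and "inj_on g (fst ` S)"
    and root: "\<And>a b. (a, b) \<in> S \<Longrightarrow> poly P (g a) = 0"
    and fibre: "\<And>a. a \<in> fst ` S \<Longrightarrow> finite {b. (a, b) \<in> S} \<and> card {b. (a, b) \<in> S} \<le> order (g a) P"
  shows "finite S \<and> card S \<le> degree P"
proof -
  have roots: "g ` fst ` S \<subseteq> {z. poly P z = 0}"
    using root by force
  have fin_fst: "finite (fst ` S)"
    using finite_imageD[OF finite_subset[OF roots poly_roots_finite[OF assms(1)]] assms(2)] .
  have S_eq: "S = (\<Union>a\<in>fst ` S. Pair a ` {b. (a, b) \<in> S})"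
    by force
  have "finite S"
    by (subst S_eq, intro finite_UN_I fin_fst finite_imageI) (use fibre in auto)
  have "card S = (\<Sum>a\<in>fst ` S. card (Pair a ` {b. (a, b) \<in> S}))"
    by (subst S_eq, rule card_UN_disjoint) (use fin_fst fibre in auto)
  also have "\<dots> = (\<Sum>a\<in>fst ` S. card {b. (a, b) \<in> S})"
    by (intro sum.cong refl card_image) (auto simp: inj_on_def)
  also have "\<dots> \<le> (\<Sum>a\<in>fst ` S. order (g a) P)"
    by (intro sum_mono) (use fibre in auto)
  also have "\<dots> = (\<Sum>z\<in>g ` fst ` S. order z P)"
    by (rule sum.reindex[OF assms(2), symmetric, unfolded comp_def])
  also have "\<dots> \<le> (\<Sum>z | poly P z = 0. order z P)"
    by (intro sum_mono2 poly_roots_finite assms(1) roots) auto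
  also have "\<dots> \<le> degree P"
    by (rule sum_order_le_degree[OF assms(1)])
  finally show ?thesis
    using \<open>finite S\<close> by simp
qed

locale confocal_ellipses =
  fixes p1 p2 e1 e2 om2 :: real
  assumes p1_pos: "0 < p1" and p2_pos: "0 < p2"
    and e1_nonneg: "0 \<le> e1" and e1_less_1: "e1 < 1"
    and e2_nonneg: "0 \<le> e2" and e2_less_1: "e2 < 1"
begin

definition k :: real where "k = e2 * cos om2"
definition l :: real where "l = e2 * sin om2"

lemma k_sq_plus_l_sq: "k\<^sup>2 + l\<^sup>2 = e2\<^sup>2"
  by (simp add: k_def l_def power_mult_distrib flip: distrib_left)

lemma e2_mult_cos_eq: "e2 * cos f = k * cos (f + om2) + l * sin (f + om2)"
  using cos_diff[of "f + om2" om2] by (simp add: k_def l_def algebra_simps)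

lemma denom1_pos: "0 < 1 + e1 * cos f"
  using e1_nonneg e1_less_1 by (rule one_plus_mult_cos_pos)

lemma denom2_pos: "0 < 1 + e2 * cos f"
  using e2_nonneg e2_less_1 by (rule one_plus_mult_cos_pos)

definition E :: "real \<Rightarrow> real" where "E a = k * (cos a + e1) + l * sin a"
definition F :: "real \<Rightarrow> real" where "F a = l * (cos a + e1) - k * sin a"
definition N :: "real \<Rightarrow> real" where "N a = (cos a + e1)\<^sup>2 + (sin a)\<^sup>2"
definition K :: "real \<Rightarrow> real" where "K a = p1 * e1 * sin a * E a"
definition M :: "real \<Rightarrow> real" where
  "M a = - (p1 * e1 * (1 - e2\<^sup>2) * sin a + p2 * (1 + e1 * cos a) * F a)"

text \<open>The possible ratios \<open>\<mu>\<close> of the tangent of the second ellipse to that of the first at a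
  critical point over \<open>f1 = a\<close> (see \<open>noncollision_crit_pointE\<close>).\<close>

definition multipliers :: "real \<Rightarrow> real set" where
  "multipliers a = {\<mu>. \<mu> * K a = M a \<and> N a * \<mu>\<^sup>2 - 2 * E a * \<mu> - (1 - e2\<^sup>2) = 0}"

lemma N_eq: "N a = 1 + e1\<^sup>2 + 2 * e1 * cos a"
  using sin_cos_squared_add[of a] by (simp add: N_def power2_eq_square algebra_simps)

lemma N_pos: "0 < N a"
proof -
  have "- e1 \<le> e1 * cos a"
    using e1_nonneg cos_ge_minus_one[of a] by (metis mult_left_mono mult_minus1_right)
  moreover have "0 < (1 - e1)\<^sup>2"
    using e1_less_1 by simp
  ultimately show ?thesis
    unfolding N_eq by (simp add: power2_eq_square algebra_simps)
qed

lemma multiplier_linear_eq: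
  assumes orth: "inner (X1 p1 e1 f1 - X2 p2 e2 om2 f2) (conic_tangent e1 0 f1) = 0"
    and C: "cos (f2 + om2) = \<mu> * (cos f1 + e1) - k" and S: "sin (f2 + om2) = \<mu> * sin f1 - l"
  shows "\<mu> * K f1 = M f1"
proof -
  define r1 where "r1 = p1 / (1 + e1 * cos f1)"
  define r2 where "r2 = p2 / (1 + e2 * cos f2)"
  have r1: "r1 * (1 + e1 * cos f1) = p1" and r2: "r2 * (1 + e2 * cos f2) = p2"
    using denom1_pos[of f1] denom2_pos[of f2] by (simp_all add: r1_def r2_def)
  have "inner (X1 p1 e1 f1 - X2 p2 e2 om2 f2) (conic_tangent e1 0 f1)
      = r1 * e1 * sin f1 + r2 * (cos (f2 + om2) * sin f1 - sin (f2 + om2) * (cos f1 + e1))"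
    unfolding X1_def X2_def r1_def[symmetric] r2_def[symmetric]
    by (simp add: conic_tangent_def inner_prod_def algebra_simps)
  also have "cos (f2 + om2) * sin f1 - sin (f2 + om2) * (cos f1 + e1) = F f1"
    by (simp add: C S F_def algebra_simps)
  finally have "0 = (r1 * e1 * sin f1 + r2 * F f1) * ((1 + e1 * cos f1) * (1 + e2 * cos f2))"
    using orth by simp
  also have "\<dots> = e1 * sin f1 * (1 + e2 * cos f2) * (r1 * (1 + e1 * cos f1))
      + F f1 * (1 + e1 * cos f1) * (r2 * (1 + e2 * cos f2))"
    by (simp add: algebra_simps)
  also have "\<dots> = p1 * e1 * sin f1 * (1 + e2 * cos f2) + p2 * F f1 * (1 + e1 * cos f1)"
    by (simp only: r1 r2) (simp add: algebra_simps)
  finally have "p1 * e1 * sin f1 * (1 + e2 * cos f2) + p2 * F f1 * (1 + e1 * cos f1) = 0"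
    by simp
  moreover have "1 + e2 * cos f2 = (1 - e2\<^sup>2) + \<mu> * E f1"
    using k_sq_plus_l_sq by (simp add: e2_mult_cos_eq C S E_def power2_eq_square algebra_simps)
  ultimately show ?thesis
    by (simp add: K_def M_def algebra_simps)
qed

lemma noncollision_crit_pointE:
  assumes crit: "crit_point p1 p2 e1 e2 om2 f1 f2" and noncoll: "dist2 p1 p2 e1 e2 om2 f1 f2 \<noteq> 0"
  obtains \<mu> where "\<mu> \<in> multipliers f1"
    and "cos (f2 + om2) = \<mu> * (cos f1 + e1) - k" and "sin (f2 + om2) = \<mu> * sin f1 - l"
proof -
  let ?D = "X1 p1 e1 f1 - X2 p2 e2 om2 f2"
  have orth: "inner ?D (conic_tangent e1 0 f1) = 0" "inner ?D (conic_tangent e2 om2 f2) = 0"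
    using crit_point_imp_orthogonal_tangents[OF _ _ _ _ crit] p1_pos p2_pos denom1_pos denom2_pos
    by (metis less_irrefl)+
  have "?D \<noteq> 0"
    using noncoll by (simp add: dist2_eq_norm)
  moreover have "conic_tangent e1 0 f1 \<noteq> 0"
    using N_pos[of f1] by (auto simp: conic_tangent_def N_def zero_prod_def)
  ultimately obtain \<mu> where "conic_tangent e2 om2 f2 = \<mu> *\<^sub>R conic_tangent e1 0 f1"
    using ex_scaleR_if_orthogonal_to_same orth by blast
  then have C: "cos (f2 + om2) = \<mu> * (cos f1 + e1) - k" and S: "sin (f2 + om2) = \<mu> * sin f1 - l"
    by (auto simp: conic_tangent_def k_def l_def algebra_simps)
  have "(\<mu> * (cos f1 + e1) - k)\<^sup>2 + (\<mu> * sin f1 - l)\<^sup>2 = 1"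
    using sin_cos_squared_add[of "f2 + om2"] by (simp add: C S add.commute)
  then have "N f1 * \<mu>\<^sup>2 - 2 * E f1 * \<mu> - (1 - e2\<^sup>2) = 0"
    using k_sq_plus_l_sq by (simp add: N_def E_def power2_eq_square algebra_simps)
  moreover have "\<mu> * K f1 = M f1"
    using orth(1) C S by (rule multiplier_linear_eq)
  ultimately show ?thesis
    using that C S by (simp add: multipliers_def)
qed

definition G :: "real \<Rightarrow> real" where
  "G a = (p1 - p2) + (p1 * k - p2 * e1) * cos a + p1 * l * sin a"

lemma collisionD:
  assumes "dist2 p1 p2 e1 e2 om2 f1 f2 = 0"
  shows "cos (f2 + om2) = cos f1" and "sin (f2 + om2) = sin f1" and "G f1 = 0"
proof -
  define r1 where "r1 = p1 / (1 + e1 * cos f1)"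
  define r2 where "r2 = p2 / (1 + e2 * cos f2)"
  have r_pos: "0 < r1" "0 < r2"
    using p1_pos p2_pos denom1_pos[of f1] denom2_pos[of f2] by (simp_all add: r1_def r2_def)
  have "r1 * cos f1 = r2 * cos (f2 + om2)" and "r1 * sin f1 = r2 * sin (f2 + om2)"
    using assms unfolding dist2_def X1_def X2_def r1_def[symmetric] r2_def[symmetric]
    by (simp_all add: add_nonneg_eq_0_iff)
  moreover have "(r * cos x)\<^sup>2 + (r * sin x)\<^sup>2 = r\<^sup>2" for r x :: real
    by (simp add: power_mult_distrib flip: distrib_left)
  ultimately have "r1\<^sup>2 = r2\<^sup>2"
    by metis
  then have "r1 = r2"
    using r_pos by (simp add: power2_eq_iff)
  with \<open>r1 * cos f1 = r2 * cos (f2 + om2)\<close> \<open>r1 * sin f1 = r2 * sin (f2 + om2)\<close>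
  show C: "cos (f2 + om2) = cos f1" and S: "sin (f2 + om2) = sin f1"
    using r_pos by simp_all
  have "p1 * (1 + e2 * cos f2) = p2 * (1 + e1 * cos f1)"
    using \<open>r1 = r2\<close> denom1_pos[of f1] denom2_pos[of f2] by (simp add: r1_def r2_def field_simps)
  then show "G f1 = 0"
    unfolding e2_mult_cos_eq C S by (simp add: G_def algebra_simps)
qed

lemma collision_unique:
  assumes "dist2 p1 p2 e1 e2 om2 f1 f2 = 0" "dist2 p1 p2 e1 e2 om2 f1 f2' = 0"
    and "f2 \<in> {0..<2 * pi}" "f2' \<in> {0..<2 * pi}"
  shows "f2 = f2'"
proof -
  have "(cos (f2 + om2), sin (f2 + om2)) = (cos (f2' + om2), sin (f2' + om2))"
    using collisionD[OF assms(1)] collisionD[OF assms(2)] by simp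
  then show ?thesis
    using assms(3,4) by (rule inj_onD[OF inj_on_cos_sin_add])
qed

definition E_poly :: "complex poly" where "E_poly = trig_lin_poly (k * e1) k l"
definition N_poly :: "complex poly" where "N_poly = trig_lin_poly (1 + e1\<^sup>2) (2 * e1) 0"
definition K_poly :: "complex poly" where
  "K_poly = smult (of_real (p1 * e1)) (trig_lin_poly 0 0 1 * E_poly)"
definition M_poly :: "complex poly" where
  "M_poly = - (smult (of_real (p1 * e1 * (1 - e2\<^sup>2))) (trig_lin_poly 1 0 0 * trig_lin_poly 0 0 1)
     + smult (of_real p2) (trig_lin_poly 1 e1 0 * trig_lin_poly (l * e1) l (- k)))"
definition crit_poly :: "complex poly" where
  "crit_poly = elim_poly M_poly K_poly E_poly N_poly (1 - e2\<^sup>2)"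

lemma poly_E_poly: "poly E_poly (cis a) = cis a * of_real (E a)"
  by (simp add: E_poly_def E_def poly_trig_lin_poly_cis algebra_simps)

lemma poly_N_poly: "poly N_poly (cis a) = cis a * of_real (N a)"
  by (simp add: N_poly_def N_eq poly_trig_lin_poly_cis algebra_simps)

lemma poly_K_poly: "poly K_poly (cis a) = (cis a)\<^sup>2 * of_real (K a)"
  by (simp add: K_poly_def K_def poly_E_poly poly_trig_lin_poly_cis power2_eq_square algebra_simps)

lemma poly_M_poly: "poly M_poly (cis a) = (cis a)\<^sup>2 * of_real (M a)"
  by (simp add: M_poly_def M_def F_def poly_trig_lin_poly_cis power2_eq_square algebra_simps)

lemma poly_crit_poly: "poly crit_poly (cis a)
    = cis a ^ 5 * of_real ((M a)\<^sup>2 * N a - 2 * M a * K a * E a - (1 - e2\<^sup>2) * (K a)\<^sup>2)"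
  unfolding crit_poly_def by (rule poly_elim_poly[OF poly_M_poly poly_K_poly poly_E_poly poly_N_poly])

lemma degree_crit_poly: "degree crit_poly \<le> 10"
proof -
  have "degree K_poly \<le> 4" "degree M_poly \<le> 4"
    unfolding K_poly_def M_poly_def E_poly_def degree_minus
    by (intro degree_add_le degree_smult_le[THEN order_trans] degree_mult_trig_lin_poly)+
  then show ?thesis
    unfolding crit_poly_def
    by (intro degree_elim_poly) (simp_all add: E_poly_def N_poly_def degree_trig_lin_poly)
qed

lemma crit_poly_nonzero:
  assumes "l \<noteq> 0"
  shows "crit_poly \<noteq> 0"
proof
  assume "crit_poly = 0"
  then have "poly crit_poly (cis 0) = 0"
    by simp
  then have "(M 0)\<^sup>2 * N 0 - 2 * M 0 * K 0 * E 0 - (1 - e2\<^sup>2) * (K 0)\<^sup>2 = 0"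
    unfolding poly_crit_poly by (metis cis_neq_zero mult_eq_0_iff of_real_eq_0_iff power_not_zero)
  then have "(p2 * (1 + e1) * (l * (1 + e1)))\<^sup>2 * (1 + e1)\<^sup>2 = 0"
    by (simp add: M_def K_def N_def F_def)
  with assms p2_pos e1_nonneg show False
    by simp
qed

lemma poly_crit_poly_eq_0:
  assumes "\<mu> \<in> multipliers a"
  shows "poly crit_poly (cis a) = 0"
proof -
  have "(M a)\<^sup>2 * N a - 2 * M a * K a * E a - (1 - e2\<^sup>2) * (K a)\<^sup>2 = 0"
    using assms unfolding multipliers_def by (blast intro: elim_eq_0)
  then show ?thesis
    by (simp only: poly_crit_poly of_real_0 mult_zero_right)
qed

lemma card_multipliers_le_order:
  assumes "l \<noteq> 0" and "multipliers a \<noteq> {}"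
  shows "finite (multipliers a)" and "card (multipliers a) \<le> order (cis a) crit_poly"
proof -
  show "finite (multipliers a)"
    unfolding multipliers_def using N_pos[of a] by (intro card_common_roots_le) simp
  from assms(2) obtain \<mu> where \<mu>: "\<mu> \<in> multipliers a"
    by blast
  then have order_pos: "1 \<le> order (cis a) crit_poly"
    using poly_crit_poly_eq_0 crit_poly_nonzero[OF assms(1)] by (simp add: order_root Suc_le_eq)
  have card_le: "card (multipliers a) \<le> (if K a = 0 then 2 else 1)"
    unfolding multipliers_def using N_pos[of a] by (intro card_common_roots_le) simp
  show "card (multipliers a) \<le> order (cis a) crit_poly"
  proof (cases "K a = 0")
    case True
    with \<mu> have "poly M_poly (cis a) = 0" "poly K_poly (cis a) = 0"
      by (simp_all add: multipliers_def poly_M_poly poly_K_poly)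
    then have "[:- cis a, 1:]\<^sup>2 dvd crit_poly"
      unfolding crit_poly_def by (rule elim_poly_double_root)
    then have "2 \<le> order (cis a) crit_poly"
      using crit_poly_nonzero[OF assms(1)] order_divides by blast
    with True card_le show ?thesis
      by simp
  next
    case False
    with card_le order_pos show ?thesis
      by simp
  qed
qed

lemma noncollision_fibre_bound:
  fixes f1 :: real
  assumes "l \<noteq> 0"
  defines "B \<equiv> {f2. (f1, f2) \<in> crit_points p1 p2 e1 e2 om2 \<and> dist2 p1 p2 e1 e2 om2 f1 f2 \<noteq> 0}"
  shows "finite B \<and> card B \<le> order (cis f1) crit_poly"
proof (cases "B = {}")
  case False
  let ?h = "\<lambda>b. (cos (b + om2), sin (b + om2))"
  let ?g = "\<lambda>\<mu>. (\<mu> * (cos f1 + e1) - k, \<mu> * sin f1 - l)"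
  have inj: "inj_on ?h B"
    by (rule inj_on_subset[OF inj_on_cos_sin_add]) (auto simp: B_def crit_points_def)
  have image: "?h ` B \<subseteq> ?g ` multipliers f1"
  proof
    fix x
    assume "x \<in> ?h ` B"
    then obtain b where "x = ?h b" "crit_point p1 p2 e1 e2 om2 f1 b" "dist2 p1 p2 e1 e2 om2 f1 b \<noteq> 0"
      by (auto simp: B_def crit_points_def)
    then show "x \<in> ?g ` multipliers f1"
      by (metis (no_types, lifting) noncollision_crit_pointE image_eqI)
  qed
  with False have "multipliers f1 \<noteq> {}"
    by blast
  note multipliers = card_multipliers_le_order[OF assms(1) this]
  have "finite (?h ` B)"
    using image multipliers(1) by (blast intro: finite_subset)
  then have "finite B"
    using inj by (rule finite_imageD)
  have "card B = card (?h ` B)"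
    using inj by (rule card_image[symmetric])
  also have "\<dots> \<le> card (?g ` multipliers f1)"
    using image multipliers(1) by (intro card_mono) auto
  also have "\<dots> \<le> card (multipliers f1)"
    by (rule card_image_le[OF multipliers(1)])
  finally show ?thesis
    using \<open>finite B\<close> multipliers(2) by simp
qed simp

lemma noncollision_crit_points_bound:
  assumes "l \<noteq> 0"
  defines "S \<equiv> {(f1, f2) \<in> crit_points p1 p2 e1 e2 om2. dist2 p1 p2 e1 e2 om2 f1 f2 \<noteq> 0}"
  shows "finite S \<and> card S \<le> 10"
proof -
  have "finite S \<and> card S \<le> degree crit_poly"
  proof (rule finite_card_le_degree_by_fibres[OF crit_poly_nonzero[OF assms(1)]])
    show "inj_on cis (fst ` S)"
      by (rule inj_on_subset[OF inj_on_cis_atLeastLessThan_2pi]) (auto simp: S_def crit_points_def)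
    show "poly crit_poly (cis a) = 0" if "(a, b) \<in> S" for a b
      using that by (auto simp: S_def crit_points_def elim: noncollision_crit_pointE intro: poly_crit_poly_eq_0)
    show "finite {b. (a, b) \<in> S} \<and> card {b. (a, b) \<in> S} \<le> order (cis a) crit_poly" for a
      using noncollision_fibre_bound[OF assms(1), of a] by (simp add: S_def)
  qed
  with degree_crit_poly show ?thesis
    by simp
qed

definition G_poly :: "complex poly" where "G_poly = trig_lin_poly (p1 - p2) (p1 * k - p2 * e1) (p1 * l)"

lemma poly_G_poly: "poly G_poly (cis a) = cis a * of_real (G a)"
  by (simp add: G_poly_def G_def poly_trig_lin_poly_cis)

lemma collisions_bound:
  assumes "l \<noteq> 0"
  defines "T \<equiv> {(f1, f2). f1 \<in> {0..<2 * pi} \<and> f2 \<in> {0..<2 * pi} \<and> dist2 p1 p2 e1 e2 om2 f1 f2 = 0}"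
  shows "finite T \<and> card T \<le> 2"
proof -
  have G_poly_nonzero: "G_poly \<noteq> 0"
    using assms(1) p1_pos by (simp add: G_poly_def trig_lin_poly_eq_0_iff)
  have root: "poly G_poly (cis a) = 0" if "(a, b) \<in> T" for a b
    using that collisionD(3)[of a b] by (simp add: T_def poly_G_poly)
  have "finite T \<and> card T \<le> degree G_poly"
  proof (rule finite_card_le_degree_by_fibres[OF G_poly_nonzero _ root])
    show "inj_on cis (fst ` T)"
      by (rule inj_on_subset[OF inj_on_cis_atLeastLessThan_2pi]) (auto simp: T_def)
    show "finite {b. (a, b) \<in> T} \<and> card {b. (a, b) \<in> T} \<le> order (cis a) G_poly"
      if "a \<in> fst ` T" for a
    proof -
      from that obtain b0 where b0: "(a, b0) \<in> T"
        by force
      then have sub: "{b. (a, b) \<in> T} \<subseteq> {b0}"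
        by (auto simp: T_def intro: collision_unique)
      have "1 \<le> order (cis a) G_poly"
        using root[OF b0] G_poly_nonzero by (simp add: order_root Suc_le_eq)
      then show ?thesis
        using card_mono[OF _ sub] finite_subset[OF sub] by simp
    qed
  qed
  then show ?thesis
    using degree_trig_lin_poly[of "p1 - p2" "p1 * k - p2 * e1" "p1 * l"] by (simp add: G_poly_def)
qed

lemma crit_points_bound:
  assumes "l \<noteq> 0"
  shows "finite {(f1, f2) \<in> crit_points p1 p2 e1 e2 om2. dist2 p1 p2 e1 e2 om2 f1 f2 \<noteq> 0} \<and>
      card {(f1, f2) \<in> crit_points p1 p2 e1 e2 om2. dist2 p1 p2 e1 e2 om2 f1 f2 \<noteq> 0} \<le> 10 \<and>
      finite (crit_points p1 p2 e1 e2 om2) \<and> card (crit_points p1 p2 e1 e2 om2) \<le> 12"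
proof -
  let ?S = "{(f1, f2) \<in> crit_points p1 p2 e1 e2 om2. dist2 p1 p2 e1 e2 om2 f1 f2 \<noteq> 0}"
  let ?T = "{(f1, f2). f1 \<in> {0..<2 * pi} \<and> f2 \<in> {0..<2 * pi} \<and> dist2 p1 p2 e1 e2 om2 f1 f2 = 0}"
  note S = noncollision_crit_points_bound[OF assms] and T = collisions_bound[OF assms]
  have sub: "crit_points p1 p2 e1 e2 om2 \<subseteq> ?S \<union> ?T"
    by (auto simp: crit_points_def)
  have "finite (?S \<union> ?T)"
    using S T by simp
  moreover have "card (?S \<union> ?T) \<le> 12"
    using S T card_Un_le[of ?S ?T] by linarith
  ultimately show ?thesis
    using S card_mono[OF _ sub] finite_subset[OF sub] by simp
qed

end

definition degenerate_params :: "(real \<times> real \<times> real \<times> real \<times> real) set" where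
  "degenerate_params = {(p1, p2, e1, e2, om2). e2 * sin om2 = 0}"

lemma closed_degenerate_params: "closed degenerate_params"
proof -
  have eq: "degenerate_params = {q. fst (snd (snd (snd q))) * sin (snd (snd (snd (snd q)))) = 0}"
    by (auto simp: degenerate_params_def)
  show ?thesis
    unfolding eq by (intro closed_Collect_eq continuous_intros)
qed

lemma degenerate_params_null: "degenerate_params \<in> null_sets lborel"
proof -
  have eq: "degenerate_params = {q. (0, 0, 0, 1, 0) \<bullet> q = 0} \<union>
      (\<Union>i::int. {q. (0, 0, 0, 0, 1) \<bullet> q = of_int i * pi})"
    by (auto simp: degenerate_params_def sin_zero_iff_int2)
  have "negligible degenerate_params"
    unfolding eq
    by (intro negligible_Un negligible_countable_Union countable_image)
       (auto intro!: negligible_hyperplane simp: zero_prod_def)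
  then show ?thesis
    using closed_degenerate_params
    by (metis borel_closed negligible_iff_null_sets null_sets_completion_iff sets_lborel)
qed

theorem mainTheorem3:
  "\<exists>Z :: (real \<times> real \<times> real \<times> real \<times> real) set.
     closed Z \<and> Z \<in> null_sets lborel \<and>
     (\<forall>p1 p2 e1 e2 om2.
        p1 > 0 \<longrightarrow> p2 > 0 \<longrightarrow> 0 \<le> e1 \<longrightarrow> e1 < 1 \<longrightarrow> 0 \<le> e2 \<longrightarrow> e2 < 1 \<longrightarrow>
        (p1, p2, e1, e2, om2) \<notin> Z \<longrightarrow>
          finite {(f1, f2) \<in> crit_points p1 p2 e1 e2 om2. dist2 p1 p2 e1 e2 om2 f1 f2 \<noteq> 0} \<and>
          card {(f1, f2) \<in> crit_points p1 p2 e1 e2 om2. dist2 p1 p2 e1 e2 om2 f1 f2 \<noteq> 0} \<le> 10 \<and>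
          finite (crit_points p1 p2 e1 e2 om2) \<and>
          card (crit_points p1 p2 e1 e2 om2) \<le> 12)"
  by (intro exI[of _ degenerate_params] conjI[OF closed_degenerate_params]
      conjI[OF degenerate_params_null] allI impI confocal_ellipses.crit_points_bound)
     (auto simp: confocal_ellipses_def confocal_ellipses.l_def degenerate_params_def)

end
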